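(* Let $K$ be a kernel as below, $\mathbf{n}=(n_1,\dots,n_d)\in\mathbb{N}^d$, and suppose $\rho_{\mathbf{j}}(\mathbf{0})\ne0$ for all $\mathbf{j}\in\Omega_{\mathbf{n}}$. Then $\dim SK(\Lambda_{\mathbf{n}})=N=2^dn_1n_2\cdots n_d$. In particular, if $n_1=\dots=n_d=n$ then $\dim SK(\Lambda_{\mathbf{n}})=(2n)^d$.
   Context: $\mathbb{T}^d=(\mathbb{R}/2\pi\mathbb{Z})^d$. Kernel: $K(\mathbf{x})=\sum_{\mathbf{l}\in\mathbb{Z}^d}a_{\mathbf{l}}e^{i\mathbf{l}\cdot\mathbf{x}}$ with $(a_{\mathbf{l}})$ real, $a_{\mathbf{l}}=a_{-\mathbf{l}}$, $\sum_{\mathbf{l}}|a_{\mathbf{l}}|<\infty$. Notation: $\mathbf{x}\cdot\mathbf{y}=\sum_ix_iy_i$; $\mathbf{x}_{\mathbf{k}}=(\pi k_1/n_1,\dots,\pi k_d/n_d)$ for $\mathbf{k}\in\mathbb{Z}^d$, $\Omega_{\mathbf{n}}=\{\mathbf{j}\in\mathbb{Z}^d:0\le j_l\le 2n_l-1\}$, $\Lambda_{\mathbf{n}}=\{\mathbf{x}_{\mathbf{k}}:\mathbf{k}\in\Omega_{\mathbf{n}}\}$, $N=2^dn_1\cdots n_d$. For $\mathbf{j}\in\mathbb{Z}^d$: $\rho_{\mathbf{j}}(\mathbf{x})=\frac{2}{N}\sum_{\mathbf{k}\in\Omega_{\mathbf{n}}}\cos(\mathbf{j}\cdot\mathbf{x}_{\mathbf{k}})K(\mathbf{x}-\mathbf{x}_{\mathbf{k}})$.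 An sk-spline on $\Lambda_{\mathbf{n}}$ (associated with $K$) is a function $s(\mathbf{x})=c+\sum_{\mathbf{k}\in\Omega_{\mathbf{n}}}c_{\mathbf{k}}K(\mathbf{x}-\mathbf{x}_{\mathbf{k}})$ with $c,c_{\mathbf{k}}\in\mathbb{R}$ and $\sum_{\mathbf{k}\in\Omega_{\mathbf{n}}}c_{\mathbf{k}}=0$; $SK(\Lambda_{\mathbf{n}})$ is the real vector space of these. *)

theory Defs
  imports "HOL-Analysis.Analysis" "HOL-Library.Function_Algebras"
begin

text \<open>Points of the torus are represented by vectors in real^'d (dimension d = CARD('d));
  frequencies by integer vectors int^'d.\<close>

definition idot :: "int^'d \<Rightarrow> real^'d \<Rightarrow> real" where
  "idot l x = (\<Sum>i\<in>UNIV. real_of_int (l$i) * x$i)"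

definition kernel :: "(int^'d \<Rightarrow> real) \<Rightarrow> real^'d \<Rightarrow> complex" where
  "kernel a x = (\<Sum>\<^sub>\<infinity>l\<in>UNIV. complex_of_real (a l) * exp (\<i> * complex_of_real (idot l x)))"

definition valid_kernel_coeffs :: "(int^'d \<Rightarrow> real) \<Rightarrow> bool" where
  "valid_kernel_coeffs a \<longleftrightarrow> (\<forall>l. a l = a (-l)) \<and> Infinite_Sum.abs_summable_on a UNIV"

definition grid_pt :: "nat^'d \<Rightarrow> int^'d \<Rightarrow> real^'d" where
  "grid_pt n k = (\<chi> i. pi * real_of_int (k$i) / real (n$i))"

definition Omega :: "nat^'d \<Rightarrow> (int^'d) set" where
  "Omega n = {j. \<forall>i. 0 \<le> j$i \<and> j$i \<le> 2 * int (n$i) - 1}"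

definition Ncard :: "nat^'d \<Rightarrow> nat" where
  "Ncard n = 2 ^ CARD('d) * (\<Prod>i\<in>UNIV. n$i)"

definition rho :: "(int^'d \<Rightarrow> real) \<Rightarrow> nat^'d \<Rightarrow> int^'d \<Rightarrow> real^'d \<Rightarrow> complex" where
  "rho a n j x = complex_of_real (2 / real (Ncard n)) *
     (\<Sum>k\<in>Omega n. complex_of_real (cos (idot j (grid_pt n k))) * kernel a (x - grid_pt n k))"

definition SK :: "(int^'d \<Rightarrow> real) \<Rightarrow> nat^'d \<Rightarrow> (real^'d \<Rightarrow> complex) set" where
  "SK a n = {s. \<exists>(c::real) (ck :: int^'d \<Rightarrow> real). (\<Sum>k\<in>Omega n. ck k) = 0 \<and>
      s = (\<lambda>x. complex_of_real c + (\<Sum>k\<in>Omega n. complex_of_real (ck k) * kernel a (x - grid_pt n k)))}"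

definition rscale :: "real \<Rightarrow> ('a \<Rightarrow> complex) \<Rightarrow> ('a \<Rightarrow> complex)" where
  "rscale r f = (\<lambda>x. complex_of_real r * f x)"

end

theory Submission
  imports Defs
begin

text \<open>Evaluate an sk-spline \<open>s = c + \<Sum>\<^sub>k c\<^sub>k K(\<cdot> - x\<^sub>k)\<close> on the grid and take the discrete
  Fourier transform over \<open>\<Lambda>\<^sub>n\<close>: since \<open>K(x\<^sub>m - x\<^sub>k)\<close> depends only on \<open>m - k\<close> modulo \<open>2n\<close>, the
  transform diagonalises, and its \<open>j\<close>-th entry is \<open>N A\<^sub>j \<^bold>\<cdot> \<hat>c\<^sub>j\<close> (plus \<open>N c\<close> for \<open>j = 0\<close>), where
  \<open>A\<^sub>j = \<Sum>\<^bsub>l \<equiv> j mod 2n\<^esub> a\<^sub>l = \<rho>\<^sub>j(0)/2\<close>. So when no \<open>\<rho>\<^sub>j(0)\<close> vanishes, an sk-spline that vanishes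
  identically has \<open>c = 0\<close> (using \<open>\<Sum> c\<^sub>k = 0\<close> at \<open>j = 0\<close>) and \<open>\<hat>c = 0\<close>, hence all \<open>c\<^sub>k = 0\<close>. Consequently
  the constant \<open>1\<close> together with the \<open>N - 1\<close> differences \<open>K(\<cdot> - x\<^sub>k) - K(\<cdot> - x\<^sub>0)\<close>, \<open>k \<noteq> 0\<close>, which
  span \<open>SK(\<Lambda>\<^sub>n)\<close>, form a basis of it.\<close>

definition grid_exp :: "nat^'d \<Rightarrow> int^'d \<Rightarrow> int^'d \<Rightarrow> complex" where
  "grid_exp n v k = exp (\<i> * complex_of_real (idot v (grid_pt n k)))"

definition grid_cong :: "nat^'d \<Rightarrow> int^'d \<Rightarrow> int^'d \<Rightarrow> bool" where
  "grid_cong n l j \<longleftrightarrow> (\<forall>i. 2 * int (n$i) dvd l$i - j$i)"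

lemma idot_add_left: "idot (u + v) x = idot u x + idot v x"
  by (simp add: idot_def distrib_right sum.distrib)

lemma idot_uminus_left: "idot (- v) x = - idot v x"
  by (simp add: idot_def sum_negf)

lemma idot_diff_right: "idot v (x - y) = idot v x - idot v y"
  by (simp add: idot_def right_diff_distrib sum_subtractf)

lemma idot_uminus_right: "idot v (- x) = - idot v x"
  by (simp add: idot_def sum_negf)

lemma grid_exp_add: "grid_exp n (u + v) k = grid_exp n u k * grid_exp n v k"
  by (simp add: grid_exp_def idot_add_left distrib_left exp_add)

lemma grid_exp_0_left [simp]: "grid_exp n 0 k = 1"
  by (simp add: grid_exp_def idot_def)

lemma grid_exp_0_right [simp]: "grid_exp n v 0 = 1"
  by (simp add: grid_exp_def idot_def grid_pt_def)

lemma norm_grid_exp [simp]: "norm (grid_exp n v k) = 1"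
  by (simp add: grid_exp_def norm_exp_i_times)

lemma grid_exp_eq_prod:
  "grid_exp n v k = (\<Prod>i\<in>UNIV. exp (\<i> * of_real (pi * of_int (v$i) * of_int (k$i) / real (n$i))))"
  by (simp add: grid_exp_def idot_def grid_pt_def of_real_sum sum_distrib_left exp_sum mult_ac)

lemma grid_exp_commute: "grid_exp n v k = grid_exp n k v"
  by (simp add: grid_exp_eq_prod mult_ac)

lemma grid_exp_uminus_commute: "grid_exp n (- v) k = grid_exp n (- k) v"
  by (simp add: grid_exp_eq_prod mult_ac)

lemma grid_exp_cong:
  assumes "grid_cong n l j"
  shows "grid_exp n l k = grid_exp n j k"
  unfolding grid_exp_eq_prod
proof (intro prod.cong refl)
  fix i
  obtain q where "l$i - j$i = 2 * int (n$i) * q"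
    using assms by (auto simp: grid_cong_def elim!: dvdE)
  then have q: "l$i = j$i + 2 * int (n$i) * q" by simp
  show "exp (\<i> * of_real (pi * of_int (l$i) * of_int (k$i) / real (n$i)))
      = exp (\<i> * of_real (pi * of_int (j$i) * of_int (k$i) / real (n$i)))"
  proof (cases "n$i = 0")
    case False
    have "\<i> * of_real (pi * of_int (l$i) * of_int (k$i) / real (n$i))
        = \<i> * of_real (pi * of_int (j$i) * of_int (k$i) / real (n$i)) + 2 * of_int (q * k$i) * pi * \<i>"
      using False by (simp add: q field_simps)
    then show ?thesis
      using exp_integer_2pi[of "of_int (q * k$i)"] by (simp add: exp_add)
  qed (simp add: q)
qed

lemma grid_cong_diff_0: "grid_cong n (l - j) 0 \<longleftrightarrow> grid_cong n l j"
  by (simp add: grid_cong_def)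

lemma grid_cong_uminus_left: "grid_cong n (- l) j \<longleftrightarrow> grid_cong n l (- j)"
proof -
  have "(- l)$i - j$i = - (l$i - (- j)$i)" for i by simp
  then show ?thesis unfolding grid_cong_def by (metis dvd_minus_iff)
qed

lemma Omega_bij_betw_PiE:
  "bij_betw vec_nth (Omega n) (PiE UNIV (\<lambda>i. {0..2 * int (n$i) - 1}))"
proof (rule bij_betw_imageI)
  show "inj_on vec_nth (Omega n)"
    by (auto intro: inj_onI simp: vec_eq_iff)
  show "vec_nth ` Omega n = PiE UNIV (\<lambda>i. {0..2 * int (n$i) - 1})"
  proof (intro equalityI subsetI)
    fix g assume "g \<in> PiE UNIV (\<lambda>i. {0..2 * int (n$i) - 1})"
    then have "vec_lambda g \<in> Omega n" and "g = vec_nth (vec_lambda g)"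
      by (auto simp: Omega_def)
    then show "g \<in> vec_nth ` Omega n" by blast
  qed (auto simp: Omega_def)
qed

lemma finite_Omega [simp]: "finite (Omega n)"
  using bij_betw_finite[OF Omega_bij_betw_PiE] by (simp add: finite_PiE)

lemma zero_in_Omega: "\<forall>i. n$i \<ge> 1 \<Longrightarrow> 0 \<in> Omega n"
  by (auto simp: Omega_def Suc_le_eq)

lemma sum_Omega_prod:
  fixes F :: "'d::finite \<Rightarrow> int \<Rightarrow> 'a::comm_semiring_1"
  shows "(\<Sum>k\<in>Omega n. \<Prod>i\<in>UNIV. F i (k$i)) = (\<Prod>i\<in>UNIV. \<Sum>t\<in>{0..2 * int (n$i) - 1}. F i t)"
proof -
  have "(\<Prod>i\<in>UNIV. \<Sum>t\<in>{0..2 * int (n$i) - 1}. F i t)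
      = (\<Sum>g\<in>PiE UNIV (\<lambda>i. {0..2 * int (n$i) - 1}). \<Prod>i\<in>UNIV. F i (g i))"
    by (rule prod_sum_PiE) auto
  also have "\<dots> = (\<Sum>k\<in>Omega n. \<Prod>i\<in>UNIV. F i (k$i))"
    by (rule sum.reindex_bij_betw[OF Omega_bij_betw_PiE, symmetric])
  finally show ?thesis ..
qed

lemma card_Omega:
  fixes n :: "nat^'d"
  shows "card (Omega n) = Ncard n"
proof -
  have "real (card (Omega n)) = (\<Sum>k\<in>Omega n. \<Prod>i\<in>(UNIV :: 'd set). 1)"
    by simp
  also have "\<dots> = (\<Prod>i\<in>UNIV. \<Sum>t\<in>{0..2 * int (n$i) - 1}. 1)"
    by (rule sum_Omega_prod)
  also have "\<dots> = (\<Prod>i\<in>UNIV. 2 * real (n$i))"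
    by simp
  also have "\<dots> = real (Ncard n)" by (simp add: Ncard_def prod.distrib)
  finally show ?thesis by linarith
qed

lemma Ncard_pos: "\<forall>i. n$i \<ge> 1 \<Longrightarrow> Ncard n > 0"
  by (auto simp: Ncard_def Suc_le_eq)

lemma grid_cong_Omega_imp_eq:
  assumes "m \<in> Omega n" "k \<in> Omega n" "grid_cong n m k"
  shows "m = k"
proof -
  have "m$i = k$i" for i
  proof (rule ccontr)
    assume ne: "m$i \<noteq> k$i"
    have "2 * int (n$i) dvd m$i - k$i" using assms(3) by (simp add: grid_cong_def)
    then have "\<bar>2 * int (n$i)\<bar> \<le> \<bar>m$i - k$i\<bar>" using ne by (intro dvd_imp_le_int) auto
    moreover have "0 \<le> m$i" "m$i < 2 * int (n$i)" "0 \<le> k$i" "k$i < 2 * int (n$i)"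
      using assms(1,2) by (auto simp: Omega_def)
    ultimately show False by linarith
  qed
  then show ?thesis by (simp add: vec_eq_iff)
qed

lemma sum_powers_root_of_unity:
  fixes z :: "'a::field"
  assumes "z ^ N = 1"
  shows "(\<Sum>t<N. z ^ t) = (if z = 1 then of_nat N else 0)"
  using assms by (simp add: geometric_sum)

lemma exp_pi_div_eq_1_iff:
  assumes "m > 0"
  shows "exp (\<i> * of_real (pi * of_int v / real m)) = 1 \<longleftrightarrow> 2 * int m dvd v"
proof
  assume "exp (\<i> * of_real (pi * of_int v / real m)) = 1"
  then obtain q :: int where "pi * of_int v / real m = 2 * pi * of_int q"
    unfolding exp_eq_1 by auto
  then have "real_of_int v = real_of_int (2 * int m * q)"
    using assms by (simp add: field_simps)
  then show "2 * int m dvd v" by (simp only: of_int_eq_iff) simp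
next
  assume "2 * int m dvd v"
  then obtain q where "v = 2 * int m * q" by (elim dvdE)
  then have "\<i> * of_real (pi * of_int v / real m) = 2 * of_int q * pi * \<i>"
    using assms by (simp add: field_simps)
  then show "exp (\<i> * of_real (pi * of_int v / real m)) = 1"
    using exp_integer_2pi[of "of_int q"] by simp
qed

lemma sum_exp_pi_grid:
  assumes "m > 0"
  shows "(\<Sum>t\<in>{0..2 * int m - 1}. exp (\<i> * of_real (pi * of_int v * of_int t / real m)))
     = (if 2 * int m dvd v then of_nat (2 * m) else 0)"
proof -
  define z where "z = exp (\<i> * of_real (pi * of_int v / real m))"
  have pow: "exp (\<i> * of_real (pi * of_int v * of_int (int t) / real m)) = z ^ t" for t
    unfolding z_def exp_of_nat_mult[symmetric] by (simp add: field_simps)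
  have "{0..2 * int m - 1} = int ` {..<2 * m}"
    by (auto simp: image_iff intro!: bexI[of _ "nat x" for x])
  then have "(\<Sum>t\<in>{0..2 * int m - 1}. exp (\<i> * of_real (pi * of_int v * of_int t / real m)))
      = (\<Sum>t<2 * m. z ^ t)"
    by (simp only: sum.reindex inj_on_of_nat o_def pow)
  also have "\<dots> = (if 2 * int m dvd v then of_nat (2 * m) else 0)"
  proof (rule trans[OF sum_powers_root_of_unity])
    have "z ^ (2 * m) = exp (\<i> * of_real (pi * of_int (2 * int m * v) / real m))"
      unfolding z_def exp_of_nat_mult[symmetric] by (simp add: field_simps)
    also have "\<dots> = 1" using assms by (subst exp_pi_div_eq_1_iff) auto
    finally show "z ^ (2 * m) = 1" .
  qed (simp only: z_def exp_pi_div_eq_1_iff[OF assms])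
  finally show ?thesis .
qed

lemma sum_grid_exp:
  assumes "\<forall>i. n$i \<ge> 1"
  shows "(\<Sum>k\<in>Omega n. grid_exp n v k) = (if grid_cong n v 0 then of_nat (Ncard n) else 0)"
proof -
  have "(\<Sum>k\<in>Omega n. grid_exp n v k)
      = (\<Prod>i\<in>UNIV. if 2 * int (n$i) dvd v$i then of_nat (2 * n$i) else 0)"
    unfolding grid_exp_eq_prod
      sum_Omega_prod[of "\<lambda>i t. exp (\<i> * of_real (pi * of_int (v$i) * of_int t / real (n$i)))"]
    using assms by (intro prod.cong refl sum_exp_pi_grid) (auto simp: Suc_le_eq)
  also have "\<dots> = (if grid_cong n v 0 then of_nat (Ncard n) else 0)"
    by (auto simp: grid_cong_def Ncard_def prod.distrib)
  finally show ?thesis .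
qed

lemma dft_inversion:
  assumes "\<forall>i. n$i \<ge> 1" "m \<in> Omega n"
  shows "(\<Sum>j\<in>Omega n. grid_exp n j m * (\<Sum>k\<in>Omega n. f k * grid_exp n (- j) k))
       = of_nat (Ncard n) * f m"
proof -
  have exp_prod: "grid_exp n j m * grid_exp n (- j) k = grid_exp n (m - k) j" for j k
    by (simp add: grid_exp_commute[of n j m] grid_exp_uminus_commute[of n j k]
        flip: grid_exp_add)
  have cong_iff: "grid_cong n (m - k) 0 \<longleftrightarrow> k = m" if "k \<in> Omega n" for k
    using grid_cong_Omega_imp_eq[OF assms(2) that] by (auto simp: grid_cong_def)
  have "(\<Sum>j\<in>Omega n. grid_exp n j m * (\<Sum>k\<in>Omega n. f k * grid_exp n (- j) k))
      = (\<Sum>j\<in>Omega n. \<Sum>k\<in>Omega n. f k * (grid_exp n j m * grid_exp n (- j) k))"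
    by (simp add: sum_distrib_left mult_ac)
  also have "\<dots> = (\<Sum>k\<in>Omega n. f k * (\<Sum>j\<in>Omega n. grid_exp n (m - k) j))"
    by (subst sum.swap) (simp add: exp_prod sum_distrib_left)
  also have "\<dots> = (\<Sum>k\<in>Omega n. if k = m then of_nat (Ncard n) * f m else 0)"
    by (intro sum.cong refl) (simp add: sum_grid_exp[OF assms(1)] cong_iff)
  also have "\<dots> = of_nat (Ncard n) * f m"
    using assms(2) by simp
  finally show ?thesis .
qed

lemma infsum_sum_swap:
  fixes f :: "'i \<Rightarrow> 'a \<Rightarrow> 'b::{topological_comm_monoid_add, t2_space}"
  assumes "finite I" "\<And>i. i \<in> I \<Longrightarrow> f i summable_on A"
  shows "(\<Sum>\<^sub>\<infinity>x\<in>A. \<Sum>i\<in>I. f i x) = (\<Sum>i\<in>I. \<Sum>\<^sub>\<infinity>x\<in>A. f i x)"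
proof (rule infsumI)
  show "((\<lambda>x. \<Sum>i\<in>I. f i x) has_sum (\<Sum>i\<in>I. \<Sum>\<^sub>\<infinity>x\<in>A. f i x)) A"
    using assms by (induction I rule: finite_induct) (auto intro: has_sum_add)
qed

lemma summable_on_kernel_coeffs:
  fixes g :: "int^'d \<Rightarrow> complex"
  assumes "valid_kernel_coeffs a" "\<And>l. norm (g l) \<le> 1"
  shows "(\<lambda>l. of_real (a l) * g l) summable_on UNIV"
proof (rule Infinite_Sum.abs_summable_summable, rule Infinite_Sum.abs_summable_on_comparison_test)
  show "Infinite_Sum.abs_summable_on a UNIV"
    using assms(1) by (simp add: valid_kernel_coeffs_def)
  show "norm (of_real (a l) * g l) \<le> norm (a l)" for l
    using mult_left_mono[OF assms(2)[of l], of "\<bar>a l\<bar>"] by (simp add: norm_mult)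
qed

lemma infsum_even_coeffs_reflect:
  fixes a :: "'a::group_add \<Rightarrow> real" and f :: "'a \<Rightarrow> complex"
  assumes "\<forall>l. a l = a (- l)"
  shows "(\<Sum>\<^sub>\<infinity>l. of_real (a l) * f (- l)) = (\<Sum>\<^sub>\<infinity>l. of_real (a l) * f l)"
proof -
  have "bij_betw uminus (UNIV :: 'a set) UNIV"
    by (rule bij_betwI[of _ _ _ uminus]) auto
  from infsum_reindex_bij_betw[OF this, of "\<lambda>l. of_real (a l) * f (- l)"]
  show ?thesis using assms by (metis (no_types, lifting) infsum_cong minus_minus)
qed

lemma kernel_grid_diff:
  "kernel a (grid_pt n m - grid_pt n k)
     = (\<Sum>\<^sub>\<infinity>l. of_real (a l) * (grid_exp n l m * grid_exp n (- l) k))"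
  by (simp add: kernel_def grid_exp_def idot_diff_right idot_uminus_left
      right_diff_distrib flip: exp_add)

lemma kernel_uminus:
  assumes "valid_kernel_coeffs a"
  shows "kernel a (- x) = kernel a x"
  using assms infsum_even_coeffs_reflect[of a "\<lambda>l. exp (\<i> * of_real (idot l x))"]
  by (simp add: kernel_def valid_kernel_coeffs_def idot_uminus_right idot_uminus_left flip: of_real_minus)

definition alias_sum :: "(int^'d \<Rightarrow> real) \<Rightarrow> nat^'d \<Rightarrow> int^'d \<Rightarrow> complex" where
  "alias_sum a n j = (\<Sum>\<^sub>\<infinity>l. of_real (a l) * of_bool (grid_cong n l j))"

lemma alias_sum_uminus:
  assumes "valid_kernel_coeffs a"
  shows "alias_sum a n (- j) = alias_sum a n j"
  using assms infsum_even_coeffs_reflect[of a "\<lambda>l. of_bool (grid_cong n l (- j))"]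
  by (simp add: alias_sum_def valid_kernel_coeffs_def grid_cong_uminus_left)

lemma sum_grid_exp_kernel:
  assumes "valid_kernel_coeffs a" "\<forall>i. n$i \<ge> 1"
  shows "(\<Sum>m\<in>Omega n. grid_exp n (- j) m * kernel a (grid_pt n m - grid_pt n k))
       = of_nat (Ncard n) * grid_exp n (- j) k * alias_sum a n j"
proof -
  define N where "N = (of_nat (Ncard n) :: complex)"
  define F where "F l m = of_real (a l) * grid_exp n (- l) k * (grid_exp n (- j) m * grid_exp n l m)" for l m
  have summand: "(\<Sum>m\<in>Omega n. F l m) = N * grid_exp n (- j) k * (of_real (a l) * of_bool (grid_cong n l j))"
    for l
  proof -
    have "grid_exp n (- j) m * grid_exp n l m = grid_exp n (l - j) m" for m
      by (metis grid_exp_add add.commute diff_conv_add_uminus)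
    then have "(\<Sum>m\<in>Omega n. F l m) = of_real (a l) * grid_exp n (- l) k * (\<Sum>m\<in>Omega n. grid_exp n (l - j) m)"
      by (simp add: F_def sum_distrib_left)
    also have "\<dots> = N * grid_exp n (- j) k * (of_real (a l) * of_bool (grid_cong n l j))"
      using grid_exp_cong[of n "- l" "- j" k]
      by (simp add: sum_grid_exp[OF assms(2)] grid_cong_diff_0 grid_cong_uminus_left N_def)
    finally show ?thesis .
  qed
  have "grid_exp n (- j) m * kernel a (grid_pt n m - grid_pt n k) = (\<Sum>\<^sub>\<infinity>l. F l m)" for m
    unfolding kernel_grid_diff infsum_cmult_right'[symmetric] F_def by (simp add: mult_ac)
  then have "(\<Sum>m\<in>Omega n. grid_exp n (- j) m * kernel a (grid_pt n m - grid_pt n k))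
      = (\<Sum>m\<in>Omega n. \<Sum>\<^sub>\<infinity>l. F l m)"
    by simp
  also have "\<dots> = (\<Sum>\<^sub>\<infinity>l. \<Sum>m\<in>Omega n. F l m)"
    unfolding F_def mult.assoc
    by (rule infsum_sum_swap[symmetric]) (auto intro!: summable_on_kernel_coeffs assms(1) simp: norm_mult)
  also have "\<dots> = N * grid_exp n (- j) k * alias_sum a n j"
    by (simp only: summand alias_sum_def infsum_cmult_right')
  finally show ?thesis by (simp add: N_def)
qed

lemma grid_pt_0 [simp]: "grid_pt n 0 = 0"
  by (simp add: grid_pt_def vec_eq_iff)

lemma cos_grid_eq: "of_real (cos (idot j (grid_pt n k))) = (grid_exp n j k + grid_exp n (- j) k) / 2"
  by (simp add: grid_exp_def cos_exp_eq idot_uminus_left flip: cos_of_real)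

lemma rho_0_eq_alias_sum:
  assumes "valid_kernel_coeffs a" "\<forall>i. n$i \<ge> 1"
  shows "rho a n j 0 = 2 * alias_sum a n j"
proof -
  define N where "N = (of_nat (Ncard n) :: complex)"
  define G where "G v = (\<Sum>k\<in>Omega n. grid_exp n (- v) k * kernel a (grid_pt n k - grid_pt n 0))" for v
  have pointwise: "of_real (cos (idot j (grid_pt n k))) * kernel a (0 - grid_pt n k)
      = (grid_exp n (- (- j)) k * kernel a (grid_pt n k - grid_pt n 0)
         + grid_exp n (- j) k * kernel a (grid_pt n k - grid_pt n 0)) / 2" for k
    by (simp add: cos_grid_eq kernel_uminus[OF assms(1)] distrib_right)
  have "(\<Sum>k\<in>Omega n. of_real (cos (idot j (grid_pt n k))) * kernel a (0 - grid_pt n k))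
      = (G (- j) + G j) / 2"
    unfolding G_def sum.distrib[symmetric] sum_divide_distrib by (rule sum.cong[OF refl pointwise])
  also have "\<dots> = N * alias_sum a n j"
    unfolding G_def sum_grid_exp_kernel[OF assms] alias_sum_uminus[OF assms(1)] N_def by simp
  finally show ?thesis
    using Ncard_pos[OF assms(2)] by (simp add: rho_def N_def)
qed

definition sk_spline :: "(int^'d \<Rightarrow> real) \<Rightarrow> nat^'d \<Rightarrow> real \<Rightarrow> (int^'d \<Rightarrow> real) \<Rightarrow> real^'d \<Rightarrow> complex"
  where "sk_spline a n c ck x = of_real c + (\<Sum>k\<in>Omega n. of_real (ck k) * kernel a (x - grid_pt n k))"

lemma SK_eq: "SK a n = {s. \<exists>c ck. (\<Sum>k\<in>Omega n. ck k) = 0 \<and> s = sk_spline a n c ck}"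
  by (simp add: SK_def sk_spline_def [abs_def])

lemma sum_grid_exp_sk_spline:
  assumes "valid_kernel_coeffs a" "\<forall>i. n$i \<ge> 1"
  shows "(\<Sum>m\<in>Omega n. grid_exp n (- j) m * sk_spline a n c ck (grid_pt n m))
       = of_real c * (\<Sum>m\<in>Omega n. grid_exp n (- j) m)
         + of_nat (Ncard n) * alias_sum a n j * (\<Sum>k\<in>Omega n. of_real (ck k) * grid_exp n (- j) k)"
proof -
  have "(\<Sum>m\<in>Omega n. grid_exp n (- j) m * sk_spline a n c ck (grid_pt n m))
      = of_real c * (\<Sum>m\<in>Omega n. grid_exp n (- j) m)
        + (\<Sum>m\<in>Omega n. \<Sum>k\<in>Omega n. of_real (ck k) * (grid_exp n (- j) m * kernel a (grid_pt n m - grid_pt n k)))"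
    by (simp add: sk_spline_def distrib_left sum.distrib sum_distrib_left mult_ac)
  also have "(\<Sum>m\<in>Omega n. \<Sum>k\<in>Omega n. of_real (ck k) * (grid_exp n (- j) m * kernel a (grid_pt n m - grid_pt n k)))
      = (\<Sum>k\<in>Omega n. of_real (ck k) * (\<Sum>m\<in>Omega n. grid_exp n (- j) m * kernel a (grid_pt n m - grid_pt n k)))"
    by (subst sum.swap) (simp add: sum_distrib_left)
  also have "\<dots> = of_nat (Ncard n) * alias_sum a n j * (\<Sum>k\<in>Omega n. of_real (ck k) * grid_exp n (- j) k)"
    by (simp add: sum_grid_exp_kernel[OF assms] sum_distrib_left mult_ac)
  finally show ?thesis .
qed

lemma sk_spline_eq_0_imp_coeffs_0:
  assumes "valid_kernel_coeffs a" "\<forall>i. n$i \<ge> 1" "\<forall>j\<in>Omega n. rho a n j 0 \<noteq> 0"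
    and "(\<Sum>k\<in>Omega n. ck k) = 0" "sk_spline a n c ck = 0"
  shows "c = 0 \<and> (\<forall>k\<in>Omega n. ck k = 0)"
proof -
  define N where "N = (of_nat (Ncard n) :: complex)"
  have "N \<noteq> 0" using Ncard_pos[OF assms(2)] by (simp add: N_def)
  define ck_hat where "ck_hat j = (\<Sum>k\<in>Omega n. of_real (ck k) * grid_exp n (- j) k)" for j
  have dft: "of_real c * (\<Sum>m\<in>Omega n. grid_exp n (- j) m) + N * alias_sum a n j * ck_hat j = 0" for j
    using sum_grid_exp_sk_spline[OF assms(1,2), of j c ck] assms(5) by (simp add: N_def ck_hat_def)
  have "ck_hat 0 = 0"
    using assms(4) by (simp add: ck_hat_def flip: of_real_sum)
  with dft[of 0] have "of_real c * N = 0"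
    by (simp add: N_def card_Omega)
  then have "c = 0" using \<open>N \<noteq> 0\<close> by simp
  have "ck_hat j = 0" if "j \<in> Omega n" for j
  proof -
    have "alias_sum a n j \<noteq> 0"
      using assms(3) that rho_0_eq_alias_sum[OF assms(1,2)] by auto
    then show ?thesis using dft[of j] \<open>c = 0\<close> \<open>N \<noteq> 0\<close> by simp
  qed
  then have "N * of_real (ck m) = 0" if "m \<in> Omega n" for m
    using dft_inversion[OF assms(2) that, of "\<lambda>k. of_real (ck k)"] by (simp add: ck_hat_def N_def)
  then show ?thesis using \<open>c = 0\<close> \<open>N \<noteq> 0\<close> by simp
qed

context vector_space
begin

lemma dim_eq_card_family:
  assumes "finite I" "f ` I \<subseteq> V" "V \<subseteq> span (f ` I)"
    and family_indep: "\<And>u. (\<Sum>i\<in>I. scale (u i) (f i)) = 0 \<Longrightarrow> \<forall>i\<in>I. u i = 0"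
  shows "dim V = card I"
proof -
  have "inj_on f I"
  proof (rule inj_onI, rule ccontr)
    fix i i' assume i: "i \<in> I" "i' \<in> I" "f i = f i'" "i \<noteq> i'"
    define u where "u t = (if t = i then 1 else if t = i' then -1 else (0 :: 'a))" for t
    have "(\<Sum>t\<in>I. scale (u t) (f t)) = (\<Sum>t\<in>{i, i'}. scale (u t) (f t))"
      using i by (intro sum.mono_neutral_right \<open>finite I\<close>) (auto simp: u_def)
    also have "\<dots> = 0"
      using i by (simp add: u_def)
    finally have "u i = 0"
      using family_indep[of u] i(1) by simp
    then show False by (simp add: u_def)
  qed
  have "independent (f ` I)"
  proof
    assume "dependent (f ` I)"
    then obtain c where c: "\<exists>v\<in>f ` I. c v \<noteq> 0" "(\<Sum>v\<in>f ` I. scale (c v) v) = 0"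
      using dependent_finite[OF finite_imageI[OF \<open>finite I\<close>]] by blast
    have "\<forall>i\<in>I. c (f i) = 0"
      using c(2) by (intro family_indep) (simp add: sum.reindex[OF \<open>inj_on f I\<close>])
    then show False
      using c(1) by blast
  qed
  then show ?thesis
    using basis_card_eq_dim[OF assms(2,3)] card_image[OF \<open>inj_on f I\<close>] by simp
qed

end

interpretation rscale: vector_space "rscale :: real \<Rightarrow> ('a \<Rightarrow> complex) \<Rightarrow> 'a \<Rightarrow> complex"
  by unfold_locales (auto simp: rscale_def fun_eq_iff algebra_simps)

lemma sum_apply: "(\<Sum>k\<in>A. f k) x = (\<Sum>k\<in>A. f k x)"
  by (induction A rule: infinite_finite_induct) auto

definition sk_basis :: "(int^'d \<Rightarrow> real) \<Rightarrow> nat^'d \<Rightarrow> int^'d \<Rightarrow> real^'d \<Rightarrow> complex" where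
  "sk_basis a n k x = (if k = 0 then 1 else kernel a (x - grid_pt n k) - kernel a (x - grid_pt n 0))"

text \<open>The kernel coefficients of \<open>\<Sum>\<^sub>k u\<^sub>k \<^bold>\<cdot> sk_basis k\<close>; the entry at \<open>0\<close> absorbs all the
  \<open>-K(\<cdot> - x\<^sub>0)\<close> terms, so they sum to zero.\<close>

definition spline_coeffs :: "nat^'d \<Rightarrow> (int^'d \<Rightarrow> real) \<Rightarrow> int^'d \<Rightarrow> real" where
  "spline_coeffs n u k = (if k = 0 then - (\<Sum>t\<in>Omega n - {0}. u t) else u k)"

lemma sum_spline_coeffs: "0 \<in> Omega n \<Longrightarrow> (\<Sum>k\<in>Omega n. spline_coeffs n u k) = 0"
  by (simp add: spline_coeffs_def sum.remove)

lemma sum_rscale_sk_basis: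
  assumes "0 \<in> Omega n"
  shows "(\<Sum>k\<in>Omega n. rscale (u k) (sk_basis a n k)) = sk_spline a n (u 0) (spline_coeffs n u)"
proof
  fix x
  define K where "K k = kernel a (x - grid_pt n k)" for k
  have "(\<Sum>k\<in>Omega n. rscale (u k) (sk_basis a n k)) x
      = of_real (u 0) + (\<Sum>k\<in>Omega n - {0}. of_real (u k) * (K k - K 0))"
    using assms by (simp add: sum_apply rscale_def sk_basis_def K_def sum.remove)
  also have "\<dots> = sk_spline a n (u 0) (spline_coeffs n u) x"
    using assms by (simp add: sk_spline_def spline_coeffs_def K_def sum.remove
        right_diff_distrib sum_subtractf sum_distrib_right)
  finally show "(\<Sum>k\<in>Omega n. rscale (u k) (sk_basis a n k)) x = \<dots>" .
qed

lemma sk_basis_in_SK: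
  assumes "0 \<in> Omega n" "k \<in> Omega n"
  shows "sk_basis a n k \<in> SK a n"
proof -
  have "(\<Sum>t\<in>Omega n. rscale (of_bool (t = k)) (sk_basis a n t))
      = (\<Sum>t\<in>Omega n. if t = k then sk_basis a n t else 0)"
    by (intro sum.cong) (auto simp: rscale_def fun_eq_iff)
  also have "\<dots> = sk_basis a n k"
    using assms(2) by simp
  finally have "sk_basis a n k = sk_spline a n (of_bool (0 = k)) (spline_coeffs n (\<lambda>t. of_bool (t = k)))"
    by (simp add: sum_rscale_sk_basis[OF assms(1)])
  then show ?thesis
    unfolding SK_eq using sum_spline_coeffs[OF assms(1)] by (intro CollectI exI conjI)
qed

lemma SK_subset_span_sk_basis:
  assumes "0 \<in> Omega n"
  shows "SK a n \<subseteq> rscale.span (sk_basis a n ` Omega n)"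
proof
  fix s assume "s \<in> SK a n"
  then obtain c ck where ck_sum: "(\<Sum>k\<in>Omega n. ck k) = 0" and s: "s = sk_spline a n c ck"
    by (auto simp: SK_eq)
  define u where "u k = (if k = 0 then c else ck k)" for k
  have "(\<Sum>t\<in>Omega n - {0}. u t) = (\<Sum>t\<in>Omega n - {0}. ck t)"
    by (rule sum.cong) (auto simp: u_def)
  moreover have "ck 0 = - (\<Sum>t\<in>Omega n - {0}. ck t)"
    using ck_sum sum.remove[OF finite_Omega assms, of ck] by simp
  ultimately have "spline_coeffs n u = ck"
    by (auto simp: spline_coeffs_def u_def)
  moreover have "u 0 = c" by (simp add: u_def)
  ultimately have "s = (\<Sum>k\<in>Omega n. rscale (u k) (sk_basis a n k))"
    by (simp add: s sum_rscale_sk_basis[OF assms])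
  also have "\<dots> \<in> rscale.span (sk_basis a n ` Omega n)"
    by (intro rscale.span_sum rscale.span_scale rscale.span_base) auto
  finally show "s \<in> rscale.span (sk_basis a n ` Omega n)" .
qed

lemma sum_rscale_sk_basis_eq_0_imp:
  assumes "valid_kernel_coeffs a" "\<forall>i. n$i \<ge> 1" "\<forall>j\<in>Omega n. rho a n j 0 \<noteq> 0"
    and "(\<Sum>k\<in>Omega n. rscale (u k) (sk_basis a n k)) = 0"
  shows "\<forall>k\<in>Omega n. u k = 0"
proof -
  have "0 \<in> Omega n" using zero_in_Omega[OF assms(2)] .
  have "sk_spline a n (u 0) (spline_coeffs n u) = 0"
    using assms(4) by (simp only: sum_rscale_sk_basis[OF \<open>0 \<in> Omega n\<close>])
  from sk_spline_eq_0_imp_coeffs_0[OF assms(1-3) sum_spline_coeffs[OF \<open>0 \<in> Omega n\<close>] this]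
  have "u 0 = 0 \<and> (\<forall>k\<in>Omega n. spline_coeffs n u k = 0)" .
  then show ?thesis by (auto simp: spline_coeffs_def split: if_splits)
qed

lemma dim_SK:
  assumes "valid_kernel_coeffs a" "\<forall>i. n$i \<ge> 1" "\<forall>j\<in>Omega n. rho a n j 0 \<noteq> 0"
  shows "rscale.dim (SK a n) = Ncard n"
proof -
  have "0 \<in> Omega n" using zero_in_Omega[OF assms(2)] .
  then have "sk_basis a n ` Omega n \<subseteq> SK a n"
    by (auto intro: sk_basis_in_SK)
  from rscale.dim_eq_card_family[OF finite_Omega this SK_subset_span_sk_basis[OF \<open>0 \<in> Omega n\<close>]
      sum_rscale_sk_basis_eq_0_imp[OF assms]]
  show ?thesis by (simp add: card_Omega)
qed

theorem mainTheorem9: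
  fixes a :: "int^'d \<Rightarrow> real" and n :: "nat^'d"
  assumes "valid_kernel_coeffs a"
    and "\<forall>i. n$i \<ge> 1"
    and "\<forall>j\<in>Omega n. rho a n j 0 \<noteq> 0"
  shows "vector_space.dim rscale (SK a n) = Ncard n
     \<and> (\<forall>m::nat. (\<forall>i. n$i = m) \<longrightarrow> vector_space.dim rscale (SK a n) = (2 * m) ^ CARD('d))"
  using dim_SK[OF assms] by (simp add: Ncard_def power_mult_distrib)

end
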